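(* Let $X$ be a $T_4$ locally compact topological space and let $\kappa$ be an uncountable cardinal. Then the following are equivalent: (i) $C_0(X)$ is $\mathrm{SQ}_{<\kappa}$; (ii) $C_0(X)$ is $\mathrm{ASQ}_{<\kappa}$; (iii) for every family $\mathscr K$ of compact subsets of $X$ with $|\mathscr K|<\kappa$, the union $\bigcup\mathscr K$ is not dense in $X$.
   Context: $C_0(X)$ denotes the Banach space of real-valued continuous functions on $X$ vanishing at infinity, with the supremum norm. For a Banach space $Z$ with unit sphere $S_Z$ and a cardinal $\kappa$: $Z$ is $\mathrm{ASQ}_{<\kappa}$ if for every set $A\subset S_Z$ with $|A|<\kappa$ and every $\varepsilon>0$ there exists $y\in S_Z$ with $\|x\pm y\|\le 1+\varepsilon$ for all $x\in A$; $Z$ is $\mathrm{SQ}_{<\kappa}$ if for every set $A\subset S_Z$ with $|A|<\kappa$ there exists $y\in S_Z$ with $\|x\pm y\|\le 1$ for all $x\in A$. *)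

theory Defs
  imports "HOL-Analysis.Analysis" "HOL-Library.Equipollence"
begin

text \<open>Elements are represented extensionally (value 0 outside the topspace),
so that distinct elements of the space are distinct HOL functions.\<close>
definition C0 :: "'a topology \<Rightarrow> ('a \<Rightarrow> real) set" where
  "C0 X = {f. continuous_map X euclideanreal f \<and> (\<forall>x. x \<notin> topspace X \<longrightarrow> f x = 0) \<and>
              (\<forall>e>0. compactin X {x \<in> topspace X. e \<le> \<bar>f x\<bar>})}"

text \<open>Supremum norm (the 0 is inserted so that the empty space gets norm 0).\<close>
definition supnorm :: "'a topology \<Rightarrow> ('a \<Rightarrow> real) \<Rightarrow> real" where
  "supnorm X f = Sup (insert 0 ((\<lambda>x. \<bar>f x\<bar>) ` topspace X))"

definition C0_sphere :: "'a topology \<Rightarrow> ('a \<Rightarrow> real) set" where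
  "C0_sphere X = {f \<in> C0 X. supnorm X f = 1}"

text \<open>ASQ_{<kappa}, where the cardinal kappa is given as the cardinality of a set K.\<close>
definition C0_ASQ :: "'a topology \<Rightarrow> 'k set \<Rightarrow> bool" where
  "C0_ASQ X K \<longleftrightarrow> (\<forall>A. A \<subseteq> C0_sphere X \<longrightarrow> A \<prec> K \<longrightarrow>
     (\<forall>\<epsilon>>0. \<exists>y\<in>C0_sphere X. \<forall>f\<in>A.
        supnorm X (\<lambda>x. f x + y x) \<le> 1 + \<epsilon> \<and> supnorm X (\<lambda>x. f x - y x) \<le> 1 + \<epsilon>))"

definition C0_SQ :: "'a topology \<Rightarrow> 'k set \<Rightarrow> bool" where
  "C0_SQ X K \<longleftrightarrow> (\<forall>A. A \<subseteq> C0_sphere X \<longrightarrow> A \<prec> K \<longrightarrow>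
     (\<exists>y\<in>C0_sphere X. \<forall>f\<in>A.
        supnorm X (\<lambda>x. f x + y x) \<le> 1 \<and> supnorm X (\<lambda>x. f x - y x) \<le> 1))"

end

theory Submission
  imports Defs
begin

text \<open>
  (ii) \<open>\<Rightarrow>\<close> (iii): for every nonempty compact \<open>C \<in> \<K>\<close> take an Urysohn function of norm one
  equal to 1 on \<open>C\<close>. An almost square element \<open>y\<close> for these fewer than \<open>\<kappa>\<close> functions satisfies
  \<open>|1 \<plusminus> y| \<le> 3/2\<close>, hence \<open>|y| \<le> 1/2\<close>, on \<open>\<Union>\<K>\<close>; if \<open>\<Union>\<K>\<close> were dense this would give
  \<open>\<parallel>y\<parallel> \<le> 1/2\<close>.

  (iii) \<open>\<Rightarrow>\<close> (i): the cozero set of \<open>f \<in> C\<^sub>0(X)\<close> is the union of the countably many compact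
  level sets \<open>{|f| \<ge> 1/(n+1)}\<close>. For \<open>|A| < \<kappa>\<close> these are fewer than \<open>\<kappa>\<close> compact sets since \<open>\<kappa>\<close>
  is uncountable, so their union is not dense; an Urysohn function of norm one supported in the
  complement of its closure has disjoint support from every \<open>f \<in> A\<close>, which makes \<open>\<parallel>f \<plusminus> y\<parallel> \<le> 1\<close>.
\<close>

unbundle cardinal_syntax

lemma countable_lesspoll_uncountable:
  assumes "countable A" "uncountable K"
  shows "A \<prec> K"
proof -
  have "A \<lesssim> (UNIV::nat set)"
    using assms(1) unfolding countable_def lepoll_def by blast
  also have "(UNIV::nat set) \<lesssim> K"
    using assms(2) infinite_le_lepoll countable_finite by metis
  finally have "A \<lesssim> K" .
  moreover have "\<not> A \<approx> K"
    using assms countable_eqpoll eqpoll_sym by metis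
  ultimately show ?thesis
    unfolding lesspoll_def by blast
qed

lemma times_nat_lesspoll_uncountable:
  assumes "A \<prec> K" "uncountable K"
  shows "A \<times> (UNIV::nat set) \<prec> K"
proof (cases "finite A")
  case True
  then show ?thesis
    using assms(2) by (intro countable_lesspoll_uncountable countable_SIGMA) (auto intro: countable_finite)
next
  case False
  then have "(UNIV::nat set) \<lesssim> A"
    using infinite_le_lepoll by blast
  then have "|(UNIV::nat set)| \<le>o |A|"
    unfolding lepoll_def using card_of_ordLeq by blast
  then have "|A \<times> (UNIV::nat set)| =o |A|"
    using card_of_Times_infinite[OF False] by blast
  then have "A \<times> (UNIV::nat set) \<approx> A"
    by (simp add: eqpoll_iff_card_of_ordIso)
  then show ?thesis
    using assms(1) by (rule eq_lesspoll_trans)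
qed

lemma supnorm_least:
  assumes "\<And>x. x \<in> topspace X \<Longrightarrow> \<bar>f x\<bar> \<le> c" "0 \<le> c"
  shows "supnorm X f \<le> c"
  unfolding supnorm_def using assms by (intro cSup_least) auto

lemma abs_le_supnorm:
  assumes "\<And>x. \<bar>f x\<bar> \<le> B" "x \<in> topspace X"
  shows "\<bar>f x\<bar> \<le> supnorm X f"
  unfolding supnorm_def
proof (rule cSup_upper)
  show "\<bar>f x\<bar> \<in> insert 0 ((\<lambda>x. \<bar>f x\<bar>) ` topspace X)"
    using assms(2) by auto
  show "bdd_above (insert 0 ((\<lambda>x. \<bar>f x\<bar>) ` topspace X))"
    using assms(1) by (intro bdd_aboveI[of _ "max 0 B"]) (auto intro: max.coboundedI2)
qed

lemma C0_bounded:
  assumes "f \<in> C0 X"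
  obtains B where "\<And>x. \<bar>f x\<bar> \<le> B"
proof -
  let ?S = "{x \<in> topspace X. 1 \<le> \<bar>f x\<bar>}"
  have "compactin X ?S" "continuous_map X euclideanreal f"
    and zero: "\<And>x. x \<notin> topspace X \<Longrightarrow> f x = 0"
    using assms unfolding C0_def by auto
  then have "compact (f ` ?S)"
    using image_compactin by fastforce
  then obtain B where B: "\<And>y. y \<in> f ` ?S \<Longrightarrow> \<bar>y\<bar> \<le> B"
    using compact_imp_bounded bounded_real by metis
  have "\<bar>f x\<bar> \<le> max 1 B" for x
    using B[of "f x"] zero[of x] by (cases "x \<in> topspace X") force+
  then show ?thesis
    using that by blast
qed

lemma C0_sphere_abs_le_1:
  assumes "f \<in> C0_sphere X"
  shows "\<bar>f x\<bar> \<le> 1"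
proof (cases "x \<in> topspace X")
  case True
  from assms have "f \<in> C0 X" "supnorm X f = 1"
    by (auto simp: C0_sphere_def)
  with True show ?thesis
    using C0_bounded abs_le_supnorm by metis
next
  case False
  with assms show ?thesis
    by (simp add: C0_sphere_def C0_def)
qed

lemma C0_if_vanishing_outside_compact:
  assumes "continuous_map X euclideanreal g" "\<And>x. x \<notin> topspace X \<Longrightarrow> g x = 0"
    and "compactin X M" "\<And>x. x \<notin> M \<Longrightarrow> g x = 0"
  shows "g \<in> C0 X"
proof -
  have "compactin X {x \<in> topspace X. e \<le> \<bar>g x\<bar>}" if "e > 0" for e
  proof (rule closed_compactin[OF assms(3)])
    show "{x \<in> topspace X. e \<le> \<bar>g x\<bar>} \<subseteq> M"
      using assms(4) that by force
    have "closed {y::real. e \<le> \<bar>y\<bar>}"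
      by (intro closed_Collect_le continuous_intros)
    then show "closedin X {x \<in> topspace X. e \<le> \<bar>g x\<bar>}"
      using closedin_continuous_map_preimage[OF assms(1), of "{y. e \<le> \<bar>y\<bar>}"] by simp
  qed
  with assms(1,2) show ?thesis
    by (simp add: C0_def)
qed

lemma C0_sphere_Urysohn:
  assumes "normal_space X" "Hausdorff_space X" "locally_compact_space X"
    and "compactin X C" "C \<noteq> {}" "openin X V" "C \<subseteq> V"
  obtains g where "g \<in> C0_sphere X" "\<And>x. x \<in> C \<Longrightarrow> g x = 1" "\<And>x. x \<notin> V \<Longrightarrow> g x = 0"
proof -
  obtain U M where U: "openin X U" and M: "compactin X M" and "C \<subseteq> U" "U \<subseteq> M"
    using assms(2-4) locally_compact_space_compact_closed_compact by metis
  have "closedin X C"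
    using assms(2,4) compactin_imp_closedin by blast
  moreover have "closedin X (topspace X - (U \<inter> V))"
    using U assms(6) by auto
  moreover have "disjnt (topspace X - (U \<inter> V)) C"
    using \<open>C \<subseteq> U\<close> assms(7) by (auto simp: disjnt_def)
  ultimately obtain f where f: "continuous_map X (top_of_set {0..1::real}) f"
    "f ` (topspace X - (U \<inter> V)) \<subseteq> {0}" "f ` C \<subseteq> {1}"
    using Urysohn_lemma[OF assms(1) _ _ _ zero_le_one] by metis
  define g where "g x = (if x \<in> topspace X then f x else 0)" for x
  have g01: "0 \<le> g x \<and> g x \<le> 1" for x
    using f(1) by (auto simp: g_def continuous_map_def)
  have "continuous_map X euclideanreal g"
    using continuous_map_eq[of X euclideanreal f g] f(1) continuous_map_in_subtopology g_def by auto
  moreover have g0: "g x = 0" if "x \<notin> U \<inter> V" for x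
    using f(2) that by (auto simp: g_def)
  moreover have "g x = 0" if "x \<notin> topspace X" for x
    using that by (simp add: g_def)
  ultimately have "g \<in> C0 X"
    using \<open>U \<subseteq> M\<close> by (intro C0_if_vanishing_outside_compact[OF _ _ M]) auto
  have C_sub: "C \<subseteq> topspace X"
    using assms(4) compactin_subset_topspace by blast
  have g1: "g x = 1" if "x \<in> C" for x
    using f(3) C_sub that by (auto simp: g_def)
  obtain c where "c \<in> C"
    using assms(5) by blast
  have "supnorm X g = 1"
    unfolding supnorm_def
  proof (rule cSup_eq_maximum)
    show "1 \<in> insert 0 ((\<lambda>x. \<bar>g x\<bar>) ` topspace X)"
      using \<open>c \<in> C\<close> g1 C_sub by force
  qed (use g01 in auto)
  with \<open>g \<in> C0 X\<close> have "g \<in> C0_sphere X"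
    by (simp add: C0_sphere_def)
  then show ?thesis
    using that g1 g0 by blast
qed

lemma C0_SQ_imp_ASQ: "C0_SQ X K \<Longrightarrow> C0_ASQ X K"
  unfolding C0_SQ_def C0_ASQ_def by (meson add_increasing2 less_imp_le)

lemma abs_le_if_supnorm_plus_minus_le:
  assumes "f \<in> C0_sphere X" "y \<in> C0_sphere X"
    and "supnorm X (\<lambda>x. f x + y x) \<le> 1 + \<epsilon>" "supnorm X (\<lambda>x. f x - y x) \<le> 1 + \<epsilon>"
    and "x \<in> topspace X" "f x = 1"
  shows "\<bar>y x\<bar> \<le> \<epsilon>"
proof -
  have "\<bar>f z + y z\<bar> \<le> 2" "\<bar>f z - y z\<bar> \<le> 2" for z
    using C0_sphere_abs_le_1[OF assms(1), of z] C0_sphere_abs_le_1[OF assms(2), of z] by linarith+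
  then have "\<bar>f x + y x\<bar> \<le> 1 + \<epsilon>" "\<bar>f x - y x\<bar> \<le> 1 + \<epsilon>"
    using abs_le_supnorm[OF _ assms(5)] assms(3,4) by (meson order_trans)+
  with assms(6) show ?thesis
    by linarith
qed

lemma supnorm_le_if_bounded_on_dense:
  assumes "continuous_map X euclideanreal y" "S \<subseteq> topspace X" "X closure_of S = topspace X"
    and "\<And>x. x \<in> S \<Longrightarrow> \<bar>y x\<bar> \<le> c" "0 \<le> c"
  shows "supnorm X y \<le> c"
proof -
  have "closedin X {x \<in> topspace X. y x \<in> {-c..c}}"
    by (rule closedin_continuous_map_preimage[OF assms(1)]) auto
  moreover have "S \<subseteq> {x \<in> topspace X. y x \<in> {-c..c}}"
    using assms(2,4) by fastforce
  ultimately have "topspace X \<subseteq> {x \<in> topspace X. y x \<in> {-c..c}}"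
    using closure_of_minimal assms(3) by metis
  with assms(5) show ?thesis
    by (intro supnorm_least) auto
qed

lemma C0_ASQ_imp_not_dense_Union_compact:
  assumes "normal_space X" "Hausdorff_space X" "locally_compact_space X" "C0_ASQ X K"
    and "\<forall>C\<in>\<K>. compactin X C" "\<K> \<prec> K"
  shows "X closure_of (\<Union>\<K>) \<noteq> topspace X"
proof
  assume dense: "X closure_of (\<Union>\<K>) = topspace X"
  have "\<exists>g. g \<in> C0_sphere X \<and> (\<forall>x\<in>C. g x = 1)" if C: "C \<in> \<K> - {{}}" for C
  proof -
    have "compactin X C" "C \<noteq> {}" "C \<subseteq> topspace X"
      using C assms(5) compactin_subset_topspace by auto
    then show ?thesis
      using C0_sphere_Urysohn[OF assms(1-3) _ _ openin_topspace] by metis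
  qed
  then obtain G where G: "\<And>C. C \<in> \<K> - {{}} \<Longrightarrow> G C \<in> C0_sphere X \<and> (\<forall>x\<in>C. G C x = 1)"
    by metis
  have "G ` (\<K> - {{}}) \<lesssim> \<K>"
    using image_lepoll subset_imp_lepoll lepoll_trans by (metis Diff_subset)
  then have "G ` (\<K> - {{}}) \<prec> K"
    using assms(6) lesspoll_trans1 by blast
  moreover have "G ` (\<K> - {{}}) \<subseteq> C0_sphere X"
    using G by blast
  ultimately obtain y where y: "y \<in> C0_sphere X"
    and almost_square: "\<forall>f\<in>G ` (\<K> - {{}}).
      supnorm X (\<lambda>x. f x + y x) \<le> 1 + 1/2 \<and> supnorm X (\<lambda>x. f x - y x) \<le> 1 + 1/2"
    using assms(4) unfolding C0_ASQ_def by (meson half_gt_zero zero_less_one)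
  have "\<bar>y x\<bar> \<le> 1/2" if "x \<in> \<Union>\<K>" for x
  proof -
    obtain C where "C \<in> \<K> - {{}}" "x \<in> C"
      using \<open>x \<in> \<Union>\<K>\<close> by blast
    moreover have "x \<in> topspace X"
      using assms(5) calculation compactin_subset_topspace by blast
    ultimately show ?thesis
      using abs_le_if_supnorm_plus_minus_le[OF _ y] G almost_square by blast
  qed
  moreover have "\<Union>\<K> \<subseteq> topspace X"
    using assms(5) compactin_subset_topspace by blast
  ultimately have "supnorm X y \<le> 1/2"
    using y dense by (intro supnorm_le_if_bounded_on_dense) (auto simp: C0_sphere_def C0_def)
  with y show False
    by (simp add: C0_sphere_def)
qed

lemma C0_cozero_eq_Union_levels:
  "{x \<in> topspace X. f x \<noteq> 0} = (\<Union>n. {x \<in> topspace X. inverse (real (Suc n)) \<le> \<bar>f x\<bar>})"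
proof safe
  fix x
  assume "x \<in> topspace X" "f x \<noteq> 0"
  then obtain n where "inverse (real (Suc n)) < \<bar>f x\<bar>"
    using reals_Archimedean[of "\<bar>f x\<bar>"] by auto
  with \<open>x \<in> topspace X\<close> show "x \<in> (\<Union>n. {x \<in> topspace X. inverse (real (Suc n)) \<le> \<bar>f x\<bar>})"
    by (blast intro: less_imp_le)
qed auto

lemma supnorm_plus_minus_le_1_if_disjoint_support:
  assumes "\<And>x. x \<in> topspace X \<Longrightarrow> \<bar>f x\<bar> \<le> 1" "\<And>x. x \<in> topspace X \<Longrightarrow> \<bar>g x\<bar> \<le> 1"
    and "\<And>x. x \<in> topspace X \<Longrightarrow> f x = 0 \<or> g x = 0"
  shows "supnorm X (\<lambda>x. f x + g x) \<le> 1 \<and> supnorm X (\<lambda>x. f x - g x) \<le> 1"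
proof -
  have "\<bar>f x + g x\<bar> \<le> 1 \<and> \<bar>f x - g x\<bar> \<le> 1" if "x \<in> topspace X" for x
    using assms(3)[OF that] assms(1,2)[OF that] by auto
  then show ?thesis
    by (auto intro!: supnorm_least)
qed

lemma not_dense_Union_compact_imp_C0_SQ:
  assumes "normal_space X" "Hausdorff_space X" "locally_compact_space X" "uncountable K"
    and not_dense: "\<And>\<K>. (\<forall>C\<in>\<K>. compactin X C) \<Longrightarrow> \<K> \<prec> K \<Longrightarrow> X closure_of (\<Union>\<K>) \<noteq> topspace X"
  shows "C0_SQ X K"
  unfolding C0_SQ_def
proof (intro allI impI)
  fix A
  assume A: "A \<subseteq> C0_sphere X" "A \<prec> K"
  define level where "level f n = {x \<in> topspace X. inverse (real (Suc n)) \<le> \<bar>f x\<bar>}"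
    for f :: "'a \<Rightarrow> real" and n :: nat
  define \<K> where "\<K> = (\<lambda>(f, n). level f n) ` (A \<times> UNIV)"
  have "\<forall>C\<in>\<K>. compactin X C"
    using A(1) unfolding \<K>_def level_def C0_sphere_def C0_def by auto
  moreover have "\<K> \<prec> K"
    unfolding \<K>_def
    by (rule lesspoll_trans1[OF image_lepoll times_nat_lesspoll_uncountable[OF A(2) assms(4)]])
  ultimately have "X closure_of (\<Union>\<K>) \<noteq> topspace X"
    by (rule not_dense)
  define V where "V = topspace X - X closure_of (\<Union>\<K>)"
  have "V \<noteq> {}"
    using \<open>X closure_of (\<Union>\<K>) \<noteq> topspace X\<close> closure_of_subset_topspace[of X "\<Union>\<K>"]
    unfolding V_def by blast
  then obtain p where "p \<in> V"
    by blast
  then have "compactin X {p}" "{p} \<subseteq> V"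
    by (auto simp: V_def)
  moreover have "openin X V"
    unfolding V_def by (intro openin_diff) auto
  ultimately obtain y where y: "y \<in> C0_sphere X" "\<And>x. x \<notin> V \<Longrightarrow> y x = 0"
    using C0_sphere_Urysohn[OF assms(1-3) _ insert_not_empty] by metis
  have disjoint_support: "f x = 0 \<or> y x = 0" if f: "f \<in> A" and x: "x \<in> topspace X" for f x
  proof (cases "f x = 0")
    case False
    with x have "x \<in> {x \<in> topspace X. f x \<noteq> 0}"
      by simp
    then have "x \<in> (\<Union>n. level f n)"
      unfolding level_def C0_cozero_eq_Union_levels .
    then obtain n where "x \<in> level f n"
      by blast
    moreover have "level f n \<in> \<K>"
      unfolding \<K>_def using f by (auto intro!: image_eqI[of _ _ "(f, n)"])
    ultimately have "x \<in> topspace X \<inter> \<Union>\<K>"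
      using x by blast
    then have "x \<in> X closure_of (\<Union>\<K>)"
      using closure_of_subset_Int[of X "\<Union>\<K>"] by blast
    then show ?thesis
      using y(2) by (simp add: V_def)
  qed simp
  have "supnorm X (\<lambda>x. f x + y x) \<le> 1 \<and> supnorm X (\<lambda>x. f x - y x) \<le> 1" if f: "f \<in> A" for f
  proof (rule supnorm_plus_minus_le_1_if_disjoint_support)
    have "f \<in> C0_sphere X"
      using f A(1) by blast
    then show "\<bar>f x\<bar> \<le> 1" for x
      by (rule C0_sphere_abs_le_1)
    show "\<bar>y x\<bar> \<le> 1" for x
      using y(1) by (rule C0_sphere_abs_le_1)
    show "f x = 0 \<or> y x = 0" if "x \<in> topspace X" for x
      using disjoint_support f that .
  qed
  with y(1) show "\<exists>y\<in>C0_sphere X. \<forall>f\<in>A. supnorm X (\<lambda>x. f x + y x) \<le> 1 \<and> supnorm X (\<lambda>x. f x - y x) \<le> 1"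
    by blast
qed

theorem theorem2p7:
  fixes X :: "'a topology" and K :: "'k set"
  assumes "t1_space X" and "normal_space X" and "locally_compact_space X"
    and "uncountable K"
  shows "(C0_SQ X K \<longleftrightarrow> C0_ASQ X K) \<and>
         (C0_ASQ X K \<longleftrightarrow>
           (\<forall>\<K>. (\<forall>C\<in>\<K>. compactin X C) \<longrightarrow> \<K> \<prec> K \<longrightarrow>
                X closure_of (\<Union>\<K>) \<noteq> topspace X))"
proof -
  have "Hausdorff_space X"
    using assms(1,2) normal_t1_imp_Hausdorff_space by blast
  note ASQ_imp_not_dense = C0_ASQ_imp_not_dense_Union_compact[OF assms(2) this assms(3)]
    and not_dense_imp_SQ = not_dense_Union_compact_imp_C0_SQ[OF assms(2) this assms(3,4)]
  show ?thesis
  proof (intro conjI iffI allI impI)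
    show "C0_ASQ X K" if "C0_SQ X K"
      using that by (rule C0_SQ_imp_ASQ)
    show "C0_SQ X K" if "C0_ASQ X K"
      by (intro not_dense_imp_SQ ASQ_imp_not_dense[OF that])
    show "X closure_of (\<Union>\<K>) \<noteq> topspace X"
      if "C0_ASQ X K" "\<forall>C\<in>\<K>. compactin X C" "\<K> \<prec> K" for \<K>
      using ASQ_imp_not_dense that .
    show "C0_ASQ X K"
      if "\<forall>\<K>. (\<forall>C\<in>\<K>. compactin X C) \<longrightarrow> \<K> \<prec> K \<longrightarrow> X closure_of (\<Union>\<K>) \<noteq> topspace X"
      using that by (intro C0_SQ_imp_ASQ not_dense_imp_SQ) blast
  qed
qed

end
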